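(* Let $\lambda\mapsto (g_{ab}(\lambda), n(\lambda), s(\lambda), u^a(\lambda))$ be any smooth one-parameter family of Einstein–perfect-fluid field configurations on a 4-manifold (not necessarily satisfying any field equations), with $u^a(\lambda)u^b(\lambda)g_{ab}(\lambda)=-1$. Define $N_{def}(\lambda)=n(\lambda)u^a(\lambda)\epsilon_{adef}(\lambda)$ and $S_{def}(\lambda)=s(\lambda)N_{def}(\lambda)$. Then for every $\lambda$, $$u^a\Big[\tfrac12 T^{bc}\frac{dg_{bc}}{d\lambda}\epsilon_{adef}-\frac{d}{d\lambda}\big(T_a{}^b\epsilon_{bdef}\big)\Big]=\mu\frac{dN_{def}}{d\lambda}+T\frac{dS_{def}}{d\lambda},$$ where all undifferentiated quantities are evaluated at $\lambda$.
   Context: A perfect fluid is specified by a smooth function $\rho(n,s)$ of the particle number density $n>0$ and the entropy per particle $s$. Define the temperature $T=\frac1n\frac{\partial\rho}{\partial s}$, the chemical potential $\mu=\frac{\partial\rho}{\partial n}-Ts$, and the pressure $p=n\frac{\partial\rho}{\partial n}-\rho$ (so $p=-\rho+\mu n+Tsn$ and $d\rho=Td(ns)+\mu dn$). On a spacetime with metric $g_{ab}$ and volume form $\epsilon_{abcd}$, the fluid has unit timelike 4-velocity $u^a$ and stress-energy tensor $T_{ab}=(\rho+p)u_au_b+pg_{ab}$, with indices raised by $g^{ab}$. *)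

theory Defs
  imports "HOL-Analysis.Analysis" "HOL-Library.Numeral_Type"
begin

text \<open>Everything is evaluated at one fixed (arbitrary) spacetime point, in a coordinate
  chart; spacetime indices range over the 4-element type 4. Only lambda-derivatives occur.\<close>

type_synonym vec4 = "real ^ 4"
type_synonym mat4 = "real ^ 4 ^ 4"

definition smooth1 :: "(real \<Rightarrow> real) \<Rightarrow> bool" where
  "smooth1 f \<longleftrightarrow> (\<exists>D :: nat \<Rightarrow> real \<Rightarrow> real. D 0 = f \<and>
     (\<forall>k x. (D k has_real_derivative D (Suc k) x) (at x)))"

definition smooth2_on :: "(real \<times> real) set \<Rightarrow> (real \<Rightarrow> real \<Rightarrow> real) \<Rightarrow> bool" where
  "smooth2_on U f \<longleftrightarrow> (\<exists>D :: nat \<Rightarrow> nat \<Rightarrow> real \<Rightarrow> real \<Rightarrow> real. D 0 0 = f \<and>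
     (\<forall>i j x y. (x, y) \<in> U \<longrightarrow>
        ((\<lambda>(a, b). D i j a b) has_derivative
           (\<lambda>(h, k). D (Suc i) j x y * h + D i (Suc j) x y * k)) (at (x, y))))"

definition rho_n :: "(real \<Rightarrow> real \<Rightarrow> real) \<Rightarrow> real \<Rightarrow> real \<Rightarrow> real" where
  "rho_n rho n s = deriv (\<lambda>x. rho x s) n"
definition rho_s :: "(real \<Rightarrow> real \<Rightarrow> real) \<Rightarrow> real \<Rightarrow> real \<Rightarrow> real" where
  "rho_s rho n s = deriv (\<lambda>y. rho n y) s"

definition temperature :: "(real \<Rightarrow> real \<Rightarrow> real) \<Rightarrow> real \<Rightarrow> real \<Rightarrow> real" where
  "temperature rho n s = (1 / n) * rho_s rho n s"
definition chempot :: "(real \<Rightarrow> real \<Rightarrow> real) \<Rightarrow> real \<Rightarrow> real \<Rightarrow> real" where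
  "chempot rho n s = rho_n rho n s - temperature rho n s * s"
definition pressure :: "(real \<Rightarrow> real \<Rightarrow> real) \<Rightarrow> real \<Rightarrow> real \<Rightarrow> real" where
  "pressure rho n s = n * rho_n rho n s - rho n s"

text \<open>Levi-Civita symbol [abcd] (with [1234] = 1) and the metric volume form
  eps_abcd = sqrt(-det g) [abcd] (orientation given by the chart).\<close>
definition levi :: "4 \<Rightarrow> 4 \<Rightarrow> 4 \<Rightarrow> 4 \<Rightarrow> real" where
  "levi a b c d = det (\<chi> i. axis (if i = 1 then a else if i = 2 then b else if i = 3 then c else d) (1::real))"

definition vol :: "mat4 \<Rightarrow> 4 \<Rightarrow> 4 \<Rightarrow> 4 \<Rightarrow> 4 \<Rightarrow> real" where
  "vol g a b c d = sqrt (- det g) * levi a b c d"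

definition eta :: mat4 where
  "eta = (\<chi> i j. if i = j then (if i = 1 then -1 else 1) else 0)"
definition lorentzian :: "mat4 \<Rightarrow> bool" where
  "lorentzian g \<longleftrightarrow> (\<exists>P :: mat4. invertible P \<and> g = transpose P ** eta ** P)"

definition ginv :: "mat4 \<Rightarrow> mat4" where "ginv g = matrix_inv g"

definition lower :: "mat4 \<Rightarrow> vec4 \<Rightarrow> 4 \<Rightarrow> real" where
  "lower g u a = (\<Sum>b\<in>UNIV. g $ a $ b * u $ b)"

definition Tdd :: "(real \<Rightarrow> real \<Rightarrow> real) \<Rightarrow> mat4 \<Rightarrow> real \<Rightarrow> real \<Rightarrow> vec4 \<Rightarrow> 4 \<Rightarrow> 4 \<Rightarrow> real" where
  "Tdd rho g n s u a b = (rho n s + pressure rho n s) * lower g u a * lower g u b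
     + pressure rho n s * g $ a $ b"

definition Tdu :: "(real \<Rightarrow> real \<Rightarrow> real) \<Rightarrow> mat4 \<Rightarrow> real \<Rightarrow> real \<Rightarrow> vec4 \<Rightarrow> 4 \<Rightarrow> 4 \<Rightarrow> real" where
  "Tdu rho g n s u a b = (\<Sum>c\<in>UNIV. Tdd rho g n s u a c * ginv g $ c $ b)"

definition Tuu :: "(real \<Rightarrow> real \<Rightarrow> real) \<Rightarrow> mat4 \<Rightarrow> real \<Rightarrow> real \<Rightarrow> vec4 \<Rightarrow> 4 \<Rightarrow> 4 \<Rightarrow> real" where
  "Tuu rho g n s u a b = (\<Sum>c\<in>UNIV. \<Sum>d\<in>UNIV. ginv g $ a $ c * ginv g $ b $ d * Tdd rho g n s u c d)"

definition Nflux :: "mat4 \<Rightarrow> real \<Rightarrow> vec4 \<Rightarrow> 4 \<Rightarrow> 4 \<Rightarrow> 4 \<Rightarrow> real" where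
  "Nflux g n u d e f = n * (\<Sum>a\<in>UNIV. u $ a * vol g a d e f)"

end

theory Submission
  imports Defs
begin

text \<open>Write \<open>\<epsilon>\<^sub>a\<close> for \<open>\<epsilon>\<^sub>a\<^sub>d\<^sub>e\<^sub>f\<close> and \<open>w = u\<^sup>a \<epsilon>\<^sub>a\<close>, so that
  \<open>T\<^sub>a\<^sup>b \<epsilon>\<^sub>b = (\<rho> + p) u\<^sub>a w + p \<epsilon>\<^sub>a\<close> and \<open>N = n w\<close>. Differentiate in \<open>\<lambda>\<close> and
  contract with \<open>u\<^sup>a\<close>: the terms with \<open>dp/d\<lambda>\<close> cancel; Jacobi's formula gives
  \<open>d\<epsilon>\<^sub>a/d\<lambda> = \<onehalf> g\<^sup>b\<^sup>c (dg\<^sub>b\<^sub>c/d\<lambda>) \<epsilon>\<^sub>a\<close>, and differentiating \<open>u\<^sup>a u\<^sub>a = -1\<close> gives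
  \<open>u\<^sup>a du\<^sub>a/d\<lambda> = \<onehalf> u\<^sup>a u\<^sup>b dg\<^sub>a\<^sub>b/d\<lambda>\<close>. These two contributions cancel exactly against
  \<open>\<onehalf> T\<^sup>b\<^sup>c (dg\<^sub>b\<^sub>c/d\<lambda>) w\<close>, leaving \<open>(d\<rho>/d\<lambda>) w + (\<rho> + p) dw/d\<lambda>\<close>. Finally
  \<open>\<rho> + p = n \<partial>\<rho>/\<partial>n\<close> and \<open>d\<rho> = \<partial>\<rho>/\<partial>n dn + \<partial>\<rho>/\<partial>s ds\<close> rewrite this as
  \<open>\<mu> dN/d\<lambda> + T d(sN)/d\<lambda>\<close>.\<close>

lemma matrix_inv_right:
  assumes "invertible (A::'a::semiring_1^'n^'n)"
  shows "A ** matrix_inv A = mat 1"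
  using someI_ex[OF assms[unfolded invertible_def]] unfolding matrix_inv_def by auto

lemma matrix_inv_left:
  assumes "invertible (A::'a::semiring_1^'n^'n)"
  shows "matrix_inv A ** A = mat 1"
  using someI_ex[OF assms[unfolded invertible_def]] unfolding matrix_inv_def by auto

lemma sum_matrix_inv_right:
  assumes "invertible (A::'a::semiring_1^'n^'n)"
  shows "(\<Sum>c\<in>UNIV. A $ a $ c * matrix_inv A $ c $ b) = (if a = b then 1 else 0)"
  using arg_cong[where f="\<lambda>M. M $ a $ b", OF matrix_inv_right[OF assms]]
  by (simp add: matrix_matrix_mult_def mat_def)

lemma sum_matrix_inv_left:
  assumes "invertible (A::'a::semiring_1^'n^'n)"
  shows "(\<Sum>c\<in>UNIV. matrix_inv A $ a $ c * A $ c $ b) = (if a = b then 1 else 0)"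
  using arg_cong[where f="\<lambda>M. M $ a $ b", OF matrix_inv_left[OF assms]]
  by (simp add: matrix_matrix_mult_def mat_def)

lemma cramer_matrix_inv:
  assumes "invertible (A::real^'n^'n)"
  shows "det (\<chi> i j. if j = k then b $ i else A $ i $ j) = (matrix_inv A *v b) $ k * det A"
proof -
  have e: "A *v (matrix_inv A *v b) = b"
    by (simp add: matrix_vector_mul_assoc matrix_inv_right[OF assms])
  show ?thesis using cramer_lemma[where A=A and x="matrix_inv A *v b" and k=k] unfolding e .
qed

lemma lorentzian_det_neg:
  assumes "lorentzian g"
  shows "det g < 0"
proof -
  obtain P where P: "invertible P" "g = transpose P ** eta ** P"
    using assms unfolding lorentzian_def by blast
  have "det eta = (\<Prod>i\<in>UNIV. eta $ i $ i)"
    by (rule det_diagonal) (simp add: eta_def)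
  also have "\<dots> = -1" by (simp add: eta_def)
  finally have "det eta = -1" .
  moreover have "det P \<noteq> 0" using P(1) invertible_det_nz by blast
  ultimately show ?thesis using P(2) by (simp add: det_mul) (use not_real_square_gt_zero in blast)
qed

lemma lorentzian_symmetric:
  assumes "lorentzian g"
  shows "g $ i $ j = g $ j $ i"
proof -
  obtain P where "g = transpose P ** eta ** P"
    using assms unfolding lorentzian_def by blast
  moreover have "transpose eta = eta" by (auto simp: eta_def transpose_def vec_eq_iff)
  ultimately have "transpose g = g" by (simp add: matrix_transpose_mul matrix_mul_assoc)
  then have "transpose g $ j $ i = g $ j $ i" by simp
  then show ?thesis by (simp add: transpose_def)
qed

section \<open>Jacobi's formula\<close>

lemma sum_prod_replace_one:
  fixes a b :: "'n::finite \<Rightarrow> 'a::comm_semiring_1"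
  assumes "p permutes (UNIV::'n set)"
  shows "(\<Sum>k\<in>UNIV. \<Prod>i\<in>UNIV. if p i = k then a i else b i)
       = (\<Sum>k\<in>UNIV. a k * (\<Prod>i\<in>UNIV-{k}. b i))"
proof -
  have "(\<Sum>k\<in>UNIV. \<Prod>i\<in>UNIV. if p i = k then a i else b i)
      = (\<Sum>k\<in>UNIV. \<Prod>i\<in>UNIV. if p i = p k then a i else b i)"
    using sum.reindex_bij_betw[OF permutes_imp_bij[OF assms],
        of "\<lambda>k. \<Prod>i\<in>UNIV. if p i = k then a i else b i"] by simp
  also have "\<dots> = (\<Sum>k\<in>UNIV. \<Prod>i\<in>UNIV. if i = k then a i else b i)"
    using permutes_inj[OF assms] by (simp add: inj_eq)
  also have "\<dots> = (\<Sum>k\<in>UNIV. a k * (\<Prod>i\<in>UNIV-{k}. b i))"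
  proof (rule sum.cong[OF refl])
    fix k
    show "(\<Prod>i\<in>UNIV. if i = k then a i else b i) = a k * (\<Prod>i\<in>UNIV-{k}. b i)"
      by (subst prod.remove[of UNIV k]) (auto intro!: prod.cong)
  qed
  finally show ?thesis .
qed

text \<open>Differentiating the Leibniz formula term by term replaces one column at a time.\<close>
lemma has_real_derivative_det:
  fixes G :: "real \<Rightarrow> real^'n^'n"
  assumes "\<And>i j. ((\<lambda>t. G t $ i $ j) has_real_derivative G' $ i $ j) (at x)"
  shows "((\<lambda>t. det (G t)) has_real_derivative
           (\<Sum>k\<in>UNIV. det (\<chi> i j. if j = k then G' $ i $ j else G x $ i $ j))) (at x)"
proof -
  have leibniz: "((\<lambda>t. det (G t)) has_real_derivative
      (\<Sum>p\<in>{p. p permutes (UNIV::'n set)}. of_int (sign p) *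
          (\<Sum>k\<in>UNIV. G' $ k $ p k * (\<Prod>i\<in>UNIV-{k}. G x $ i $ p i)))) (at x)"
    unfolding det_def by (intro DERIV_sum DERIV_cmult has_field_derivative_prod assms)
  have "(\<Sum>k\<in>UNIV. det (\<chi> i j. if j = k then G' $ i $ j else G x $ i $ j))
     = (\<Sum>k\<in>UNIV. \<Sum>p\<in>{p. p permutes (UNIV::'n set)}. of_int (sign p) *
          (\<Prod>i\<in>UNIV. if p i = k then G' $ i $ p i else G x $ i $ p i))"
    unfolding det_def by (auto intro!: sum.cong prod.cong)
  also have "\<dots> = (\<Sum>p\<in>{p. p permutes (UNIV::'n set)}. of_int (sign p) *
          (\<Sum>k\<in>UNIV. \<Prod>i\<in>UNIV. if p i = k then G' $ i $ p i else G x $ i $ p i))"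
    by (subst sum.swap) (simp add: sum_distrib_left)
  also have "\<dots> = (\<Sum>p\<in>{p. p permutes (UNIV::'n set)}. of_int (sign p) *
          (\<Sum>k\<in>UNIV. G' $ k $ p k * (\<Prod>i\<in>UNIV-{k}. G x $ i $ p i)))"
    by (rule sum.cong[OF refl]) (simp add: sum_prod_replace_one[where a="\<lambda>i. G' $ i $ _ i"])
  finally show ?thesis using leibniz by simp
qed

lemma jacobi_formula:
  fixes G :: "real \<Rightarrow> real^'n^'n"
  assumes "\<And>i j. ((\<lambda>t. G t $ i $ j) has_real_derivative G' $ i $ j) (at x)"
    and "invertible (G x)"
  shows "((\<lambda>t. det (G t)) has_real_derivative
           det (G x) * (\<Sum>i\<in>UNIV. \<Sum>j\<in>UNIV. matrix_inv (G x) $ j $ i * G' $ i $ j)) (at x)"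
proof -
  have "det (\<chi> i j. if j = k then G' $ i $ j else G x $ i $ j)
      = (\<Sum>j\<in>UNIV. matrix_inv (G x) $ k $ j * G' $ j $ k) * det (G x)" for k
    using cramer_matrix_inv[OF assms(2), of k "\<chi> i. G' $ i $ k"]
    by (simp add: matrix_vector_mult_def cong: if_cong)
  then have "(\<Sum>k\<in>UNIV. det (\<chi> i j. if j = k then G' $ i $ j else G x $ i $ j))
      = det (G x) * (\<Sum>i\<in>UNIV. \<Sum>j\<in>UNIV. matrix_inv (G x) $ j $ i * G' $ i $ j)"
    by (simp add: sum_distrib_left sum_distrib_right mult_ac) (rule sum.swap)
  then show ?thesis using has_real_derivative_det[OF assms(1)] by simp
qed

lemma smooth1_has_real_derivative:
  assumes "smooth1 f"
  shows "(f has_real_derivative deriv f x) (at x)"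
proof -
  obtain D where "D 0 = f" "\<And>k x. (D k has_real_derivative D (Suc k) x) (at x)"
    using assms unfolding smooth1_def by blast
  then have "(f has_real_derivative D 1 x) (at x)" by (metis One_nat_def)
  then show ?thesis by (metis DERIV_imp_deriv)
qed

lemma DERIV_compose_pair:
  assumes "((\<lambda>(a, b). F a b) has_derivative (\<lambda>(h, k). Fa * h + Fb * k)) (at (p x, q x))"
    and "(p has_real_derivative p') (at x)" and "(q has_real_derivative q') (at x)"
  shows "((\<lambda>t. F (p t) (q t)) has_real_derivative Fa * p' + Fb * q') (at x)"
proof -
  have "((\<lambda>t. (p t, q t)) has_derivative (\<lambda>h. (p' * h, q' * h))) (at x)"
    using has_derivative_Pair[OF assms(2,3)[unfolded has_field_derivative_def]] by simp
  from diff_chain_at[OF this assms(1)]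
  have "((\<lambda>t. F (p t) (q t)) has_derivative (\<lambda>h. Fa * (p' * h) + Fb * (q' * h))) (at x)"
    by (simp add: o_def)
  then show ?thesis
    unfolding has_field_derivative_def by (rule has_derivative_eq_rhs) (auto simp: algebra_simps)
qed

lemma smooth2_on_witness_partials:
  assumes D0: "D 0 0 = F"
    and D: "\<And>i j x y. (x, y) \<in> U \<Longrightarrow> ((\<lambda>(a, b). D i j a b) has_derivative
           (\<lambda>(h, k). D (Suc i) j x y * h + D i (Suc j) x y * k)) (at (x, y))"
    and "(x, y) \<in> U"
  shows "rho_n F x y = D 1 0 x y" and "rho_s F x y = D 0 1 x y"
proof -
  have "((\<lambda>t. D 0 0 t y) has_real_derivative D 1 0 x y * 1 + D 0 1 x y * 0) (at x)"
    by (rule DERIV_compose_pair[where p="\<lambda>t. t" and q="\<lambda>t. y"])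
      (use D[OF \<open>(x, y) \<in> U\<close>, of 0 0] in \<open>auto intro!: derivative_eq_intros\<close>)
  then show "rho_n F x y = D 1 0 x y" unfolding rho_n_def D0[symmetric] by (simp add: DERIV_imp_deriv)
  have "((\<lambda>t. D 0 0 x t) has_real_derivative D 1 0 x y * 0 + D 0 1 x y * 1) (at y)"
    by (rule DERIV_compose_pair[where p="\<lambda>t. x" and q="\<lambda>t. t"])
      (use D[OF \<open>(x, y) \<in> U\<close>, of 0 0] in \<open>auto intro!: derivative_eq_intros\<close>)
  then show "rho_s F x y = D 0 1 x y" unfolding rho_s_def D0[symmetric] by (simp add: DERIV_imp_deriv)
qed

lemma smooth2_on_has_derivative:
  assumes "smooth2_on U F" and "(x, y) \<in> U"
  shows "((\<lambda>(a, b). F a b) has_derivative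
           (\<lambda>(h, k). rho_n F x y * h + rho_s F x y * k)) (at (x, y))"
proof -
  obtain D where D0: "D 0 0 = F" and D: "\<And>i j x y. (x, y) \<in> U \<Longrightarrow>
      ((\<lambda>(a, b). D i j a b) has_derivative
         (\<lambda>(h, k). D (Suc i) j x y * h + D i (Suc j) x y * k)) (at (x, y))"
    using assms(1) unfolding smooth2_on_def by blast
  show ?thesis
    using D[OF assms(2), of 0 0] smooth2_on_witness_partials[OF D0 D assms(2)] D0 by simp
qed

lemma smooth2_on_rho_n:
  assumes "smooth2_on U F" and "open U"
  shows "smooth2_on U (rho_n F)"
proof -
  obtain D where D0: "D 0 0 = F" and D: "\<And>i j x y. (x, y) \<in> U \<Longrightarrow>
      ((\<lambda>(a, b). D i j a b) has_derivative
         (\<lambda>(h, k). D (Suc i) j x y * h + D i (Suc j) x y * k)) (at (x, y))"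
    using assms(1) unfolding smooth2_on_def by blast
  define D' where "D' i j = (if i = 0 \<and> j = 0 then rho_n F else D (Suc i) j)" for i j
  have "((\<lambda>(a, b). D' i j a b) has_derivative
          (\<lambda>(h, k). D' (Suc i) j x y * h + D' i (Suc j) x y * k)) (at (x, y))"
    if "(x, y) \<in> U" for i j x y
  proof (cases "i = 0 \<and> j = 0")
    case True
    have "((\<lambda>(a, b). D 1 0 a b) has_derivative
          (\<lambda>(h, k). D 2 0 x y * h + D 1 1 x y * k)) (at (x, y))"
      using D[OF that, of 1 0] by (simp add: numeral_2_eq_2)
    then have "((\<lambda>(a, b). rho_n F a b) has_derivative
          (\<lambda>(h, k). D 2 0 x y * h + D 1 1 x y * k)) (at (x, y))"
      by (rule has_derivative_transform_within_open[OF _ assms(2) that])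
        (auto simp: smooth2_on_witness_partials(1)[OF D0 D])
    with True show ?thesis by (simp add: D'_def numeral_2_eq_2)
  next
    case False
    then show ?thesis using D[OF that, of "Suc i" j] by (auto simp: D'_def)
  qed
  moreover have "D' 0 0 = rho_n F" by (simp add: D'_def)
  ultimately show ?thesis unfolding smooth2_on_def by blast
qed

lemma sum_lower_matrix_inv:
  assumes "invertible g" and "\<And>i j. g $ i $ j = g $ j $ i"
  shows "(\<Sum>c\<in>UNIV. lower g u c * matrix_inv g $ c $ b) = u $ b"
proof -
  have "(\<Sum>c\<in>UNIV. lower g u c * matrix_inv g $ c $ b)
      = (\<Sum>e\<in>UNIV. u $ e * (\<Sum>c\<in>UNIV. g $ e $ c * matrix_inv g $ c $ b))"
    unfolding lower_def sum_distrib_left sum_distrib_right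
    by (subst sum.swap) (simp add: assms(2) mult_ac)
  then show ?thesis by (simp add: sum_matrix_inv_right[OF assms(1)] if_distrib if_distribR cong: if_cong)
qed

lemma sum_matrix_inv_lower:
  assumes "invertible g"
  shows "(\<Sum>c\<in>UNIV. matrix_inv g $ b $ c * lower g u c) = u $ b"
proof -
  have "(\<Sum>c\<in>UNIV. matrix_inv g $ b $ c * lower g u c)
      = (\<Sum>e\<in>UNIV. (\<Sum>c\<in>UNIV. matrix_inv g $ b $ c * g $ c $ e) * u $ e)"
    unfolding lower_def sum_distrib_left sum_distrib_right by (subst sum.swap) (simp add: mult_ac)
  then show ?thesis by (simp add: sum_matrix_inv_left[OF assms] if_distrib if_distribR cong: if_cong)
qed

lemma Tdu_eq:
  assumes "invertible g" and "\<And>i j. g $ i $ j = g $ j $ i"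
  shows "Tdu rho g n s u a b = (rho n s + pressure rho n s) * lower g u a * u $ b
            + pressure rho n s * (if a = b then 1 else 0)"
proof -
  have "Tdu rho g n s u a b = (rho n s + pressure rho n s) * lower g u a
          * (\<Sum>c\<in>UNIV. lower g u c * matrix_inv g $ c $ b)
     + pressure rho n s * (\<Sum>c\<in>UNIV. g $ a $ c * matrix_inv g $ c $ b)"
    unfolding Tdu_def Tdd_def ginv_def by (simp add: algebra_simps sum.distrib sum_distrib_left)
  then show ?thesis by (simp add: sum_lower_matrix_inv[OF assms] sum_matrix_inv_right[OF assms(1)])
qed

lemma Tuu_eq:
  assumes "invertible g"
  shows "Tuu rho g n s u b c = (rho n s + pressure rho n s) * u $ b * u $ c
            + pressure rho n s * matrix_inv g $ c $ b"
proof -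
  have "Tuu rho g n s u b c = (rho n s + pressure rho n s)
       * (\<Sum>x\<in>UNIV. matrix_inv g $ b $ x * lower g u x)
       * (\<Sum>y\<in>UNIV. matrix_inv g $ c $ y * lower g u y)
     + pressure rho n s * (\<Sum>y\<in>UNIV. (\<Sum>x\<in>UNIV. matrix_inv g $ b $ x * g $ x $ y) * matrix_inv g $ c $ y)"
    unfolding Tuu_def Tdd_def ginv_def
    by (simp add: algebra_simps sum.distrib sum_distrib_left sum_distrib_right) (subst sum.swap, simp)
  then show ?thesis by (simp add: sum_matrix_inv_lower[OF assms] sum_matrix_inv_left[OF assms]
        if_distrib if_distribR cong: if_cong)
qed

locale fluid_family =
  fixes rho :: "real \<Rightarrow> real \<Rightarrow> real"
    and g :: "real \<Rightarrow> mat4" and n s :: "real \<Rightarrow> real" and u :: "real \<Rightarrow> vec4"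
  assumes rho_smooth: "smooth2_on {(x, y). x > 0} rho"
    and g_smooth: "\<And>i j. smooth1 (\<lambda>t. g t $ i $ j)"
    and n_smooth: "smooth1 n" and s_smooth: "smooth1 s"
    and u_smooth: "\<And>i. smooth1 (\<lambda>t. u t $ i)"
    and g_lor: "\<And>t. lorentzian (g t)"
    and n_pos: "\<And>t. n t > 0"
    and u_norm: "\<And>t. (\<Sum>a\<in>UNIV. \<Sum>b\<in>UNIV. u t $ a * u t $ b * g t $ a $ b) = -1"
begin

definition energy :: "real \<Rightarrow> real" where
  "energy t = rho (n t) (s t)"

definition press :: "real \<Rightarrow> real" where
  "press t = pressure rho (n t) (s t)"

definition sqrt_det :: "real \<Rightarrow> real" where
  "sqrt_det t = sqrt (- det (g t))"

definition flux :: "4 \<Rightarrow> 4 \<Rightarrow> 4 \<Rightarrow> real \<Rightarrow> real" where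
  "flux d e f t = (\<Sum>a\<in>UNIV. u t $ a * vol (g t) a d e f)"

definition trace_dg :: "real \<Rightarrow> real" where
  "trace_dg l = (\<Sum>i\<in>UNIV. \<Sum>j\<in>UNIV. matrix_inv (g l) $ j $ i * deriv (\<lambda>t. g t $ i $ j) l)"

definition velocity_dg :: "real \<Rightarrow> real" where
  "velocity_dg l = (\<Sum>a\<in>UNIV. \<Sum>b\<in>UNIV. u l $ a * u l $ b * deriv (\<lambda>t. g t $ a $ b) l)"

lemma metric_symmetric: "g t $ i $ j = g t $ j $ i"
  using lorentzian_symmetric[OF g_lor] .

lemma metric_det_neg: "det (g t) < 0"
  using lorentzian_det_neg[OF g_lor] .

lemma metric_invertible: "invertible (g t)"
  using metric_det_neg invertible_det_nz by (metis less_irrefl)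

lemmas data_has_derivative =
  smooth1_has_real_derivative[OF g_smooth] smooth1_has_real_derivative[OF u_smooth]
  smooth1_has_real_derivative[OF n_smooth] smooth1_has_real_derivative[OF s_smooth]

lemmas data_differentiable = data_has_derivative[unfolded DERIV_deriv_iff_real_differentiable]

lemma open_density_domain: "open {(x :: real, y :: real). x > 0}"
proof -
  have "{(x :: real, y :: real). x > 0} = {0<..} \<times> UNIV" by auto
  then show ?thesis by (simp add: open_Times)
qed

lemma energy_has_derivative:
  "(energy has_real_derivative
      rho_n rho (n l) (s l) * deriv n l + rho_s rho (n l) (s l) * deriv s l) (at l)"
  unfolding energy_def
  by (rule DERIV_compose_pair[OF smooth2_on_has_derivative[OF rho_smooth]])
    (use n_pos data_has_derivative in auto)

lemma press_has_derivative: "(press has_real_derivative deriv press l) (at l)"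
  unfolding DERIV_deriv_iff_real_differentiable
proof -
  have "((\<lambda>t. rho_n rho (n t) (s t)) has_real_derivative
      rho_n (rho_n rho) (n l) (s l) * deriv n l + rho_s (rho_n rho) (n l) (s l) * deriv s l) (at l)"
    by (rule DERIV_compose_pair[OF smooth2_on_has_derivative
          [OF smooth2_on_rho_n[OF rho_smooth open_density_domain]]])
      (use n_pos data_has_derivative in auto)
  with energy_has_derivative show "press differentiable at l"
    unfolding press_def pressure_def energy_def[symmetric]
    by (intro differentiable_diff differentiable_mult data_differentiable)
      (auto simp: real_differentiable_def)
qed

lemma sqrt_det_has_derivative:
  "(sqrt_det has_real_derivative sqrt_det l * trace_dg l / 2) (at l)"
proof -
  have "((\<lambda>t. det (g t)) has_real_derivative det (g l) * (\<Sum>i\<in>UNIV. \<Sum>j\<in>UNIV.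
      matrix_inv (g l) $ j $ i * (\<chi> i j. deriv (\<lambda>t. g t $ i $ j) l) $ i $ j)) (at l)"
    by (rule jacobi_formula) (simp_all add: data_has_derivative metric_invertible)
  then have "((\<lambda>t. det (g t)) has_real_derivative det (g l) * trace_dg l) (at l)"
    unfolding trace_dg_def by simp
  from DERIV_chain2[OF DERIV_real_sqrt DERIV_minus[OF this]]
  have "(sqrt_det has_real_derivative
      inverse (sqrt (- det (g l))) / 2 * - (det (g l) * trace_dg l)) (at l)"
    using metric_det_neg[of l] unfolding sqrt_det_def by simp
  moreover have "inverse (sqrt (- det (g l))) / 2 * - (det (g l) * trace_dg l)
      = sqrt_det l * trace_dg l / 2"
  proof -
    have "sqrt (- det (g l)) * sqrt (- det (g l)) = - det (g l)" "sqrt (- det (g l)) > 0"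
      using metric_det_neg[of l] by simp_all
    then show ?thesis unfolding sqrt_det_def by (simp add: field_simps)
  qed
  ultimately show ?thesis by metis
qed

lemma vol_eq_sqrt_det: "vol (g t) a d e f = sqrt_det t * levi a d e f"
  by (simp add: vol_def sqrt_det_def)

lemma flux_has_derivative: "(flux d e f has_real_derivative deriv (flux d e f) l) (at l)"
  unfolding DERIV_deriv_iff_real_differentiable flux_def vol_eq_sqrt_det
proof -
  have "sqrt_det differentiable at l"
    using sqrt_det_has_derivative real_differentiable_def by blast
  then show "(\<lambda>t. \<Sum>a\<in>UNIV. u t $ a * (sqrt_det t * levi a d e f)) differentiable at l"
    by (auto intro!: differentiable_sum differentiable_mult data_differentiable)
qed

lemma lower_has_derivative:
  "((\<lambda>t. lower (g t) (u t) a) has_real_derivative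
      (\<Sum>b\<in>UNIV. deriv (\<lambda>t. g t $ a $ b) l * u l $ b + deriv (\<lambda>t. u t $ b) l * g l $ a $ b)) (at l)"
  unfolding lower_def by (intro DERIV_sum DERIV_mult data_has_derivative)

lemma velocity_lower: "(\<Sum>a\<in>UNIV. u t $ a * lower (g t) (u t) a) = -1"
  using u_norm[of t] by (simp add: lower_def sum_distrib_left mult_ac)

text \<open>Differentiating \<open>u\<^sup>a u\<^sup>b g\<^sub>a\<^sub>b = -1\<close> gives \<open>2 u\<^sup>a g\<^sub>a\<^sub>b u'\<^sup>b = - u\<^sup>a u\<^sup>b g'\<^sub>a\<^sub>b\<close>.\<close>
lemma velocity_lower_deriv:
  "(\<Sum>a\<in>UNIV. u l $ a * deriv (\<lambda>t. lower (g t) (u t) a) l) = velocity_dg l / 2"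
proof -
  define S where "S = (\<Sum>a\<in>UNIV. \<Sum>b\<in>UNIV. u l $ a * g l $ a $ b * deriv (\<lambda>t. u t $ b) l)"
  have "((\<lambda>t. \<Sum>a\<in>UNIV. \<Sum>b\<in>UNIV. u t $ a * u t $ b * g t $ a $ b) has_real_derivative
      (\<Sum>a\<in>UNIV. \<Sum>b\<in>UNIV. (deriv (\<lambda>t. u t $ a) l * u l $ b + deriv (\<lambda>t. u t $ b) l * u l $ a)
          * g l $ a $ b + deriv (\<lambda>t. g t $ a $ b) l * (u l $ a * u l $ b))) (at l)"
    by (intro DERIV_sum DERIV_mult data_has_derivative)
  moreover have "((\<lambda>t. \<Sum>a\<in>UNIV. \<Sum>b\<in>UNIV. u t $ a * u t $ b * g t $ a $ b)
      has_real_derivative 0) (at l)"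
    unfolding u_norm by (rule DERIV_const)
  ultimately have "(\<Sum>a\<in>UNIV. \<Sum>b\<in>UNIV. (deriv (\<lambda>t. u t $ a) l * u l $ b
      + deriv (\<lambda>t. u t $ b) l * u l $ a) * g l $ a $ b
      + deriv (\<lambda>t. g t $ a $ b) l * (u l $ a * u l $ b)) = 0"
    using DERIV_unique by blast
  moreover have "(\<Sum>a\<in>UNIV. \<Sum>b\<in>UNIV. deriv (\<lambda>t. u t $ a) l * u l $ b * g l $ a $ b) = S"
    unfolding S_def by (subst sum.swap) (simp add: mult_ac metric_symmetric)
  ultimately have "2 * S + velocity_dg l = 0"
    unfolding velocity_dg_def S_def by (simp add: algebra_simps sum.distrib)
  moreover have "(\<Sum>a\<in>UNIV. u l $ a * deriv (\<lambda>t. lower (g t) (u t) a) l) = velocity_dg l + S"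
    unfolding DERIV_imp_deriv[OF lower_has_derivative] velocity_dg_def S_def
    by (simp add: algebra_simps sum.distrib sum_distrib_left)
  ultimately show ?thesis by linarith
qed

lemma mixed_stress_vol_eq:
  "(\<Sum>b\<in>UNIV. Tdu rho (g t) (n t) (s t) (u t) a b * vol (g t) b d e f)
     = (energy t + press t) * lower (g t) (u t) a * flux d e f t + press t * vol (g t) a d e f"
proof -
  have "(\<Sum>b\<in>UNIV. Tdu rho (g t) (n t) (s t) (u t) a b * vol (g t) b d e f)
     = (\<Sum>b\<in>UNIV. (energy t + press t) * lower (g t) (u t) a * (u t $ b * vol (g t) b d e f)
          + (if a = b then press t * vol (g t) b d e f else 0))"
    unfolding Tdu_eq[OF metric_invertible metric_symmetric] energy_def press_def
    by (intro sum.cong) (auto simp: algebra_simps)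
  then show ?thesis unfolding flux_def by (simp add: sum.distrib sum_distrib_left)
qed

lemma deriv_mixed_stress_vol:
  "deriv (\<lambda>t. \<Sum>b\<in>UNIV. Tdu rho (g t) (n t) (s t) (u t) a b * vol (g t) b d e f) l
     = (deriv energy l + deriv press l) * lower (g l) (u l) a * flux d e f l
       + (energy l + press l) * (deriv (\<lambda>t. lower (g t) (u t) a) l * flux d e f l
                                 + lower (g l) (u l) a * deriv (flux d e f) l)
       + deriv press l * vol (g l) a d e f + press l * vol (g l) a d e f * trace_dg l / 2"
proof -
  have energy': "(energy has_real_derivative deriv energy l) (at l)"
    unfolding DERIV_deriv_iff_has_field_derivative using energy_has_derivative by blast
  have lower': "((\<lambda>t. lower (g t) (u t) a) has_real_derivative
      deriv (\<lambda>t. lower (g t) (u t) a) l) (at l)"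
    unfolding DERIV_deriv_iff_has_field_derivative using lower_has_derivative by blast
  have volume': "((\<lambda>t. sqrt_det t * levi a d e f) has_real_derivative
      sqrt_det l * trace_dg l / 2 * levi a d e f) (at l)"
    by (rule DERIV_cmult_right[OF sqrt_det_has_derivative])
  show ?thesis
    unfolding mixed_stress_vol_eq unfolding vol_eq_sqrt_det
    by (simp only: DERIV_imp_deriv[OF DERIV_add[OF
          DERIV_mult[OF DERIV_mult[OF DERIV_add[OF energy' press_has_derivative] lower']
            flux_has_derivative]
          DERIV_mult[OF press_has_derivative volume']]])
      (simp add: algebra_simps)
qed

lemma Tuu_contract_dg:
  "(\<Sum>b\<in>UNIV. \<Sum>c\<in>UNIV. Tuu rho (g l) (n l) (s l) (u l) b c * deriv (\<lambda>t. g t $ b $ c) l)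
     = (energy l + press l) * velocity_dg l + press l * trace_dg l"
  unfolding Tuu_eq[OF metric_invertible] velocity_dg_def trace_dg_def energy_def press_def
  by (simp add: algebra_simps sum.distrib sum_distrib_left)

text \<open>The pressure variation and the volume-form variation drop out; this is where the
  normalisation of \<open>u\<close> enters.\<close>
lemma stress_variation_contracted:
  "(\<Sum>a\<in>UNIV. u l $ a *
      ((1/2) * (\<Sum>b\<in>UNIV. \<Sum>c\<in>UNIV. Tuu rho (g l) (n l) (s l) (u l) b c
                   * deriv (\<lambda>t. g t $ b $ c) l) * vol (g l) a d e f
       - deriv (\<lambda>t. \<Sum>b\<in>UNIV. Tdu rho (g t) (n t) (s t) (u t) a b * vol (g t) b d e f) l))
   = deriv energy l * flux d e f l + (energy l + press l) * deriv (flux d e f) l"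
proof -
  define U where "U = (\<Sum>a\<in>UNIV. u l $ a * lower (g l) (u l) a)"
  define U' where "U' = (\<Sum>a\<in>UNIV. u l $ a * deriv (\<lambda>t. lower (g t) (u t) a) l)"
  have "(\<Sum>a\<in>UNIV. u l $ a *
      ((1/2) * (\<Sum>b\<in>UNIV. \<Sum>c\<in>UNIV. Tuu rho (g l) (n l) (s l) (u l) b c
                   * deriv (\<lambda>t. g t $ b $ c) l) * vol (g l) a d e f
       - deriv (\<lambda>t. \<Sum>b\<in>UNIV. Tdu rho (g t) (n t) (s t) (u t) a b * vol (g t) b d e f) l))
    = ((energy l + press l) * velocity_dg l + press l * trace_dg l) / 2 * flux d e f l
      - (deriv energy l + deriv press l) * U * flux d e f l
      - (energy l + press l) * (U' * flux d e f l + U * deriv (flux d e f) l)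
      - deriv press l * flux d e f l - press l * flux d e f l * trace_dg l / 2"
    unfolding Tuu_contract_dg deriv_mixed_stress_vol U_def U'_def flux_def
    by (simp add: sum_subtractf sum.distrib sum_distrib_left sum_distrib_right algebra_simps)
  also have "\<dots> = deriv energy l * flux d e f l + (energy l + press l) * deriv (flux d e f) l"
    unfolding U_def velocity_lower U'_def velocity_lower_deriv by (simp add: algebra_simps)
  finally show ?thesis .
qed

text \<open>Thermodynamics enters only here, through \<open>\<rho> + p = n \<partial>\<rho>/\<partial>n\<close> and the chain rule for \<open>\<rho>\<close>.\<close>
theorem first_law_variation:
  "(\<Sum>a\<in>UNIV. u l $ a *
      ((1/2) * (\<Sum>b\<in>UNIV. \<Sum>c\<in>UNIV. Tuu rho (g l) (n l) (s l) (u l) b c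
                   * deriv (\<lambda>t. g t $ b $ c) l) * vol (g l) a d e f
       - deriv (\<lambda>t. \<Sum>b\<in>UNIV. Tdu rho (g t) (n t) (s t) (u t) a b * vol (g t) b d e f) l))
   = chempot rho (n l) (s l) * deriv (\<lambda>t. Nflux (g t) (n t) (u t) d e f) l
     + temperature rho (n l) (s l) * deriv (\<lambda>t. s t * Nflux (g t) (n t) (u t) d e f) l"
proof -
  have Nflux_eq: "Nflux (g t) (n t) (u t) d e f = n t * flux d e f t" for t
    by (simp add: Nflux_def flux_def)
  have N': "deriv (\<lambda>t. n t * flux d e f t) l = deriv n l * flux d e f l + deriv (flux d e f) l * n l"
    by (intro DERIV_imp_deriv DERIV_mult data_has_derivative flux_has_derivative)
  have SN': "deriv (\<lambda>t. s t * (n t * flux d e f t)) l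
      = deriv s l * (n l * flux d e f l) + (deriv n l * flux d e f l + deriv (flux d e f) l * n l) * s l"
    by (intro DERIV_imp_deriv DERIV_mult data_has_derivative flux_has_derivative)
  have enthalpy: "energy l + press l = n l * rho_n rho (n l) (s l)"
    by (simp add: energy_def press_def pressure_def)
  show ?thesis
    unfolding stress_variation_contracted enthalpy DERIV_imp_deriv[OF energy_has_derivative]
      Nflux_eq N' SN' chempot_def temperature_def
    using n_pos[of l] by (simp add: field_simps)
qed

end

theorem lemma1:
  fixes rho :: "real \<Rightarrow> real \<Rightarrow> real"
    and g :: "real \<Rightarrow> mat4" and n s :: "real \<Rightarrow> real" and u :: "real \<Rightarrow> vec4"
    and l :: real and d e f :: 4
  assumes rho_smooth: "smooth2_on {(x, y). x > 0} rho"
    and g_smooth: "\<And>i j. smooth1 (\<lambda>t. g t $ i $ j)"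
    and n_smooth: "smooth1 n" and s_smooth: "smooth1 s"
    and u_smooth: "\<And>i. smooth1 (\<lambda>t. u t $ i)"
    and g_lor: "\<And>t. lorentzian (g t)"
    and n_pos: "\<And>t. n t > 0"
    and u_norm: "\<And>t. (\<Sum>a\<in>UNIV. \<Sum>b\<in>UNIV. u t $ a * u t $ b * g t $ a $ b) = -1"
  shows "(\<Sum>a\<in>UNIV. u l $ a *
            ((1/2) * (\<Sum>b\<in>UNIV. \<Sum>c\<in>UNIV. Tuu rho (g l) (n l) (s l) (u l) b c
                         * deriv (\<lambda>t. g t $ b $ c) l) * vol (g l) a d e f
             - deriv (\<lambda>t. \<Sum>b\<in>UNIV. Tdu rho (g t) (n t) (s t) (u t) a b * vol (g t) b d e f) l))
       = chempot rho (n l) (s l) * deriv (\<lambda>t. Nflux (g t) (n t) (u t) d e f) l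
         + temperature rho (n l) (s l) * deriv (\<lambda>t. s t * Nflux (g t) (n t) (u t) d e f) l"
proof -
  interpret fluid_family rho g n s u
    by unfold_locales (fact assms)+
  show ?thesis by (rule first_law_variation)
qed

end
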